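(* Let $n\ge3$ be an odd integer. For $1\le r\le n-1$ let $T^r_n=\{(k,a,b)\in(\mathbb{R}\setminus C_n)\times\mathbb{R}\times\mathbb{R}: k\neq0,\ \mathrm{rank}(B^{(k,a,b)}_n)\le r,\ 4a^3+27b^2=0\}\setminus\{(k,0,0):k\in\mathbb{R}\}$. Then (a) $T^{n-1}_n=\{(k,a^{(n)}_{k,3},b^{(n)}_{k,3}): k\in\mathbb{R}\setminus C_n\}$; (b) the matrix $B^{(k,a,b)}_n$ has rank exactly $n-1$ for all but finitely many triples $(k,a,b)\in T^{n-1}_n$; (c) for each $1\le r\le n-2$, the matrix $B^{(k,a,b)}_n$ has rank $r$ for only finitely many triples $(k,a,b)\in T^{n-1}_n$.
   Context: For real $k,a,b$, the generalized $k$-FL sequence is $S^{(a,b)}_{k,0}=2b$, $S^{(a,b)}_{k,1}=bk+a$, $S^{(a,b)}_{k,m}=kS^{(a,b)}_{k,m-1}+S^{(a,b)}_{k,m-2}$. $B^{(k,a,b)}_n$ is the $n\times n$ circulant matrix whose $(i,j)$ entry is $S^{(a,b)}_{k,j-i+1}$ if $j\ge i$ and $S^{(a,b)}_{k,n+j-i+1}$ if $j<i$. Define $f_m,g_m\in\mathbb{Z}[T]$ by $f_0=0,f_1=1,g_0=2,g_1=T$, $f_m=Tf_{m-1}+f_{m-2}$, $g_m=Tg_{m-1}+g_{m-2}$; $P_n=f_{n+1}+f_n$, $Q_n=g_{n+1}+g_n$; $C_n=\{k\in\mathbb{R}: P_n(k)-1=0\text{ or }Q_n(k)-k-2=0\}$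 (for odd $n$, $0\in C_n$). For $k\notin C_n$, the singular $k$-FL pair of level $n$ of Type 3 is $a^{(n)}_{k,3}=-\frac{27(P_n(k)-1)^2}{4(Q_n(k)-k-2)^2}$, $b^{(n)}_{k,3}=\frac{27(P_n(k)-1)^3}{4(Q_n(k)-k-2)^3}$. The condition $4a^3+27b^2=0$ means the curve $y^2=x^3+ax+b$ is singular. *)

theory Defs
  imports "Jordan_Normal_Form.DL_Rank" "HOL-Computational_Algebra.Polynomial"
begin

fun FL :: "real \<Rightarrow> real \<Rightarrow> real \<Rightarrow> nat \<Rightarrow> real" where
  "FL k a b 0 = 2 * b"
| "FL k a b (Suc 0) = b * k + a"
| "FL k a b (Suc (Suc m)) = k * FL k a b (Suc m) + FL k a b m"

definition Bmat :: "nat \<Rightarrow> real \<Rightarrow> real \<Rightarrow> real \<Rightarrow> real mat" where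
  "Bmat n k a b = mat n n (\<lambda>(i, j). if i \<le> j then FL k a b (j - i + 1) else FL k a b (n + j - i + 1))"

definition mrank :: "real mat \<Rightarrow> nat" where
  "mrank A = vec_space.rank (dim_row A) A"

fun fpoly :: "nat \<Rightarrow> int poly" where
  "fpoly 0 = 0"
| "fpoly (Suc 0) = 1"
| "fpoly (Suc (Suc m)) = [:0, 1:] * fpoly (Suc m) + fpoly m"

fun gpoly :: "nat \<Rightarrow> int poly" where
  "gpoly 0 = [:2:]"
| "gpoly (Suc 0) = [:0, 1:]"
| "gpoly (Suc (Suc m)) = [:0, 1:] * gpoly (Suc m) + gpoly m"

definition Ppoly :: "nat \<Rightarrow> int poly" where "Ppoly n = fpoly (Suc n) + fpoly n"
definition Qpoly :: "nat \<Rightarrow> int poly" where "Qpoly n = gpoly (Suc n) + gpoly n"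

definition Pv :: "nat \<Rightarrow> real \<Rightarrow> real" where "Pv n k = poly (map_poly of_int (Ppoly n)) k"
definition Qv :: "nat \<Rightarrow> real \<Rightarrow> real" where "Qv n k = poly (map_poly of_int (Qpoly n)) k"

definition Cset :: "nat \<Rightarrow> real set" where
  "Cset n = {k. Pv n k - 1 = 0 \<or> Qv n k - k - 2 = 0}"

definition a3 :: "nat \<Rightarrow> real \<Rightarrow> real" where
  "a3 n k = - (27 * (Pv n k - 1)^2) / (4 * (Qv n k - k - 2)^2)"
definition b3 :: "nat \<Rightarrow> real \<Rightarrow> real" where
  "b3 n k = (27 * (Pv n k - 1)^3) / (4 * (Qv n k - k - 2)^3)"

definition Tset :: "nat \<Rightarrow> nat \<Rightarrow> (real \<times> real \<times> real) set" where
  "Tset n r = {(k, a, b). k \<notin> Cset n \<and> k \<noteq> 0 \<and> mrank (Bmat n k a b) \<le> r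
                 \<and> 4 * a^3 + 27 * b^2 = 0} - {(k, 0, 0) | k. True}"

end

theory Submission
  imports Defs
begin

(* Writing S_m = a f_m(k) + b g_m(k), the linear form a (P_n(k) - 1) + b (Q_n(k) - k - 2) equals
   S_{n+1} + S_n - S_1 - S_0 = k (S_1 + ... + S_n), i.e. k times every row sum of the circulant B.
   Subtracting k times row i and row i+1 from row i-1 kills all entries but two, so every kernel
   vector x of B satisfies the cyclic relation (S_0 - S_n) x_i + (S_1 - S_{n+1}) x_{i-1} = 0.
   Unless the two coefficients are opposite, this gives x_i = \<rho>^i x_0 with \<rho>^n = 1 and \<rho> \<noteq> 1,
   so x = 0 for odd n; if they are opposite, i.e. if the linear form vanishes, x is constant.  They
   cannot both vanish for (a, b) \<noteq> (0, 0): the sum of S_{m+1} (S_{m+2} - S_m) = k S_{m+1}^2 over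
   m < n telescopes to S_n S_{n+1} - S_0 S_1.  Hence for k \<noteq> 0 the matrix B is singular iff the
   linear form vanishes, and then its rank is exactly n - 1.  Intersecting this line with the cusp
   4a^3 + 27b^2 = 0 yields the Type 3 pair, and since every triple of T^{n-1}_n has rank exactly
   n - 1, the exceptional sets in (b) and (c) are empty. *)

lemma map_poly_of_int_add:
  "map_poly (of_int :: int \<Rightarrow> 'a::ring_1) (p + q) = map_poly of_int p + map_poly of_int q"
  by (rule poly_eqI) (simp add: coeff_map_poly)

lemma poly_map_poly_of_int_recurrence:
  "poly (map_poly (of_int :: int \<Rightarrow> 'a::comm_ring_1) ([:0, 1:] * p + q)) x
     = x * poly (map_poly of_int p) x + poly (map_poly of_int q) x"
  by (simp add: map_poly_of_int_add map_poly_pCons)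

definition fval :: "nat \<Rightarrow> real \<Rightarrow> real" where
  "fval m k = poly (map_poly of_int (fpoly m)) k"

definition gval :: "nat \<Rightarrow> real \<Rightarrow> real" where
  "gval m k = poly (map_poly of_int (gpoly m)) k"

lemma fval_simps:
  "fval 0 k = 0" "fval (Suc 0) k = 1" "fval (Suc (Suc m)) k = k * fval (Suc m) k + fval m k"
  by (simp_all only: fval_def fpoly.simps poly_map_poly_of_int_recurrence) simp_all

lemma gval_simps:
  "gval 0 k = 2" "gval (Suc 0) k = k" "gval (Suc (Suc m)) k = k * gval (Suc m) k + gval m k"
  by (simp_all only: gval_def gpoly.simps poly_map_poly_of_int_recurrence) (simp_all add: map_poly_pCons)

lemma FL_eq_fval_gval: "FL k a b m = a * fval m k + b * gval m k"
  by (induction k a b m rule: FL.induct) (simp_all add: fval_simps gval_simps algebra_simps)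

lemma Pv_eq_fval: "Pv n k = fval (Suc n) k + fval n k"
  by (simp add: Pv_def Ppoly_def map_poly_of_int_add fval_def)

lemma Qv_eq_gval: "Qv n k = gval (Suc n) k + gval n k"
  by (simp add: Qv_def Qpoly_def map_poly_of_int_add gval_def)

lemma fval_at_zero: "fval m 0 = (if odd m then 1 else 0)"
  by (induction m rule: fpoly.induct) (simp_all add: fval_simps)

lemma zero_in_Cset: "0 \<in> Cset n"
  by (simp add: Cset_def Pv_eq_fval fval_at_zero)

lemma linear_form_eq_FL:
  "a * (Pv n k - 1) + b * (Qv n k - k - 2) = FL k a b (Suc n) + FL k a b n - FL k a b 1 - FL k a b 0"
  by (simp add: FL_eq_fval_gval Pv_eq_fval Qv_eq_gval fval_simps gval_simps algebra_simps)

lemma k_times_sum_FL: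
  "k * (\<Sum>m<n. FL k a b (Suc m)) = FL k a b (Suc n) + FL k a b n - FL k a b 1 - FL k a b 0"
  by (induction n) (simp_all add: algebra_simps)

lemma sum_FL_telescope:
  "(\<Sum>m<n. FL k a b (Suc m) * (FL k a b (Suc (Suc m)) - FL k a b m))
     = FL k a b n * FL k a b (Suc n) - FL k a b 0 * FL k a b 1"
  by (induction n) (simp_all add: algebra_simps)

lemma FL_periodic_imp_zero:
  assumes k: "k \<noteq> 0" and n: "n \<ge> 1"
    and period: "FL k a b n = FL k a b 0" "FL k a b (Suc n) = FL k a b 1"
  shows "a = 0 \<and> b = 0"
proof -
  have "(\<Sum>m<n. FL k a b (Suc m) * (FL k a b (Suc (Suc m)) - FL k a b m))
      = k * (\<Sum>m<n. (FL k a b (Suc m))\<^sup>2)"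
    by (simp add: sum_distrib_left power2_eq_square algebra_simps)
  with sum_FL_telescope[of k a b n] period k have "(\<Sum>m<n. (FL k a b (Suc m))\<^sup>2) = 0"
    by (simp add: algebra_simps)
  then have vanish: "FL k a b (Suc m) = 0" if "m < n" for m
    using sum_nonneg_eq_0_iff[of "{..<n}" "\<lambda>m. (FL k a b (Suc m))\<^sup>2"] that by simp
  have "FL k a b 1 = 0" "FL k a b n = 0"
    using vanish[of 0] vanish[of "n - 1"] n by simp_all
  then show ?thesis using period by simp
qed

(* Column offset of entry (i, j) in the circulant: B (i, j) = S_{circ_offset n i j + 1}. *)
definition circ_offset :: "nat \<Rightarrow> nat \<Rightarrow> nat \<Rightarrow> nat" where
  "circ_offset n i j = (if i \<le> j then j - i else j + n - i)"

definition circ_pred :: "nat \<Rightarrow> nat \<Rightarrow> nat" where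
  "circ_pred n i = (if i = 0 then n - 1 else i - 1)"

definition circ_succ :: "nat \<Rightarrow> nat \<Rightarrow> nat" where
  "circ_succ n i = (if i = n - 1 then 0 else i + 1)"

lemma circulant_row_combination_entry:
  fixes c :: "nat \<Rightarrow> 'a::comm_ring"
  assumes n: "3 \<le> n" and i: "i < n" and j: "j < n"
    and rec: "\<And>m. 1 \<le> m \<Longrightarrow> m + 2 \<le> n \<Longrightarrow> c (m + 1) = k * c m + c (m - 1)"
  shows "c (circ_offset n (circ_pred n i) j) - k * c (circ_offset n i j) - c (circ_offset n (circ_succ n i) j)
    = (if j = i then c 1 - k * c 0 - c (n - 1)
       else if j = circ_pred n i then c 0 - k * c (n - 1) - c (n - 2) else 0)"
proof -
  consider "j = i" | "j \<noteq> i" "j = circ_pred n i" | "j \<noteq> i" "j \<noteq> circ_pred n i" by blast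
  then show ?thesis
  proof cases
    case 1
    then show ?thesis using n i by (simp add: circ_offset_def circ_pred_def circ_succ_def)
  next
    case 2
    then have "circ_offset n (circ_pred n i) j = 0" "circ_offset n i j = n - 1"
      "circ_offset n (circ_succ n i) j = n - 2"
      using n i by (auto simp: circ_offset_def circ_pred_def circ_succ_def)
    then show ?thesis using 2 by simp
  next
    case 3
    define m where "m = circ_offset n i j"
    have "circ_offset n (circ_pred n i) j = m + 1" "circ_offset n (circ_succ n i) j = m - 1"
      "1 \<le> m" "m + 2 \<le> n"
      using 3 n i j unfolding m_def by (auto simp: circ_offset_def circ_pred_def circ_succ_def split: if_splits)
    then show ?thesis using rec[of m] 3 unfolding m_def[symmetric] by simp
  qed
qed

lemma circulant_row_combination:
  fixes c x :: "nat \<Rightarrow> 'a::comm_ring"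
  assumes n: "3 \<le> n" and i: "i < n"
    and rec: "\<And>m. 1 \<le> m \<Longrightarrow> m + 2 \<le> n \<Longrightarrow> c (m + 1) = k * c m + c (m - 1)"
  shows "(\<Sum>j<n. c (circ_offset n (circ_pred n i) j) * x j) - k * (\<Sum>j<n. c (circ_offset n i j) * x j)
      - (\<Sum>j<n. c (circ_offset n (circ_succ n i) j) * x j)
    = (c 1 - k * c 0 - c (n - 1)) * x i + (c 0 - k * c (n - 1) - c (n - 2)) * x (circ_pred n i)"
proof -
  have pred: "circ_pred n i \<noteq> i" "circ_pred n i < n" using n i by (auto simp: circ_pred_def)
  have "(\<Sum>j<n. c (circ_offset n (circ_pred n i) j) * x j) - k * (\<Sum>j<n. c (circ_offset n i j) * x j)
      - (\<Sum>j<n. c (circ_offset n (circ_succ n i) j) * x j)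
    = (\<Sum>j<n. (c (circ_offset n (circ_pred n i) j) - k * c (circ_offset n i j)
               - c (circ_offset n (circ_succ n i) j)) * x j)"
    by (simp add: sum_subtractf sum_distrib_left sum.distrib algebra_simps)
  also have "\<dots> = (\<Sum>j<n. (if j = i then (c 1 - k * c 0 - c (n - 1)) * x j else 0)
      + (if j = circ_pred n i then (c 0 - k * c (n - 1) - c (n - 2)) * x j else 0))"
    by (rule sum.cong[OF refl], subst circulant_row_combination_entry[OF n i _ rec]) (auto simp: pred)
  also have "\<dots> = (c 1 - k * c 0 - c (n - 1)) * x i + (c 0 - k * c (n - 1) - c (n - 2)) * x (circ_pred n i)"
    using i pred by (simp add: sum.distrib)
  finally show ?thesis .
qed

lemma Bmat_carrier: "Bmat n k a b \<in> carrier_mat n n"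
  by (simp add: Bmat_def)

lemma mrank_Bmat: "mrank (Bmat n k a b) = vec_space.rank n (Bmat n k a b)"
  by (simp add: mrank_def Bmat_def)

lemma Bmat_mult_vec:
  assumes "v \<in> carrier_vec n" "i < n"
  shows "(Bmat n k a b *\<^sub>v v) $ i = (\<Sum>j<n. FL k a b (circ_offset n i j + 1) * v $ j)"
  using assms
  by (auto simp: Bmat_def scalar_prod_def row_def circ_offset_def lessThan_atLeast0 add.commute
      intro!: sum.cong)

lemma Bmat_kernel_relation:
  assumes n: "3 \<le> n" and v: "v \<in> carrier_vec n" and ker: "Bmat n k a b *\<^sub>v v = 0\<^sub>v n" and i: "i < n"
  shows "(FL k a b 0 - FL k a b n) * v $ i + (FL k a b 1 - FL k a b (Suc n)) * v $ circ_pred n i = 0"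
proof -
  define c where "c m = FL k a b (m + 1)" for m
  have rec: "c (m + 1) = k * c m + c (m - 1)" if "1 \<le> m" for m
    using that by (cases m) (auto simp: c_def)
  have row: "(\<Sum>j<n. c (circ_offset n i' j) * v $ j) = 0" if "i' < n" for i'
    using Bmat_mult_vec[OF v that, of k a b] ker that by (simp add: c_def)
  have "circ_pred n i < n" "circ_succ n i < n"
    using i n by (auto simp: circ_pred_def circ_succ_def)
  then have "(c 1 - k * c 0 - c (n - 1)) * v $ i + (c 0 - k * c (n - 1) - c (n - 2)) * v $ circ_pred n i = 0"
    using circulant_row_combination[OF n i rec, of "\<lambda>j. v $ j"] row i by simp
  moreover obtain m where "n = Suc (Suc m)" using n by (intro that[of "n - 2"]) arith
  ultimately show ?thesis by (simp add: c_def algebra_simps)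
qed

lemma cyclic_relation_imp_zero:
  fixes x :: "nat \<Rightarrow> real"
  assumes odd: "odd n"
    and rel: "\<And>i. i < n \<Longrightarrow> \<beta> * x i + \<alpha> * x (circ_pred n i) = 0"
    and not_opposite: "\<alpha> + \<beta> \<noteq> 0" and j: "j < n"
  shows "x j = 0"
proof (cases "\<beta> = 0")
  case True
  have "circ_succ n j < n" "circ_pred n (circ_succ n j) = j"
    using j by (auto simp: circ_pred_def circ_succ_def)
  then show ?thesis using rel[of "circ_succ n j"] True not_opposite by simp
next
  case False
  define \<rho> where "\<rho> = - \<alpha> / \<beta>"
  have step: "x i = \<rho> * x (circ_pred n i)" if "i < n" for i
    using rel[OF that] False unfolding \<rho>_def by (simp add: field_simps)
  have powers: "x i = \<rho> ^ i * x 0" if "i < n" for i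
    using that
  proof (induction i)
    case (Suc i)
    then show ?case using step[OF Suc.prems] by (simp add: circ_pred_def)
  qed simp
  have n: "n > 0" using odd_pos[OF odd] .
  have "x 0 = \<rho> * x (n - 1)"
    using step[of 0] n by (simp add: circ_pred_def)
  also have "x (n - 1) = \<rho> ^ (n - 1) * x 0"
    using n by (intro powers) simp
  also have "\<rho> * (\<rho> ^ (n - 1) * x 0) = \<rho> ^ n * x 0"
    using n by (simp add: power_eq_if)
  finally have x0: "x 0 = \<rho> ^ n * x 0" .
  show ?thesis
  proof (cases "x 0 = 0")
    case True
    then show ?thesis using powers[OF j] by (metis mult_zero_right)
  next
    case False
    with x0 have "\<rho> ^ n = 1" by simp
    then have "\<rho> = 1" using odd_real_root_power_cancel[OF odd, of \<rho>] n by simp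
    then have "\<alpha> + \<beta> = 0" using \<open>\<beta> \<noteq> 0\<close> unfolding \<rho>_def by (simp add: field_simps)
    then show ?thesis using not_opposite by simp
  qed
qed

lemma cyclic_relation_imp_constant:
  fixes x :: "nat \<Rightarrow> 'a::field"
  assumes rel: "\<And>i. i < n \<Longrightarrow> - \<alpha> * x i + \<alpha> * x (circ_pred n i) = 0"
    and \<alpha>: "\<alpha> \<noteq> 0" and j: "j < n"
  shows "x j = x 0"
  using j
proof (induction j)
  case (Suc j)
  then show ?case using rel[OF Suc.prems] \<alpha> by (simp add: circ_pred_def)
qed simp

lemma circ_offset_row_sum:
  assumes "i < n"
  shows "(\<Sum>j<n. FL k a b (circ_offset n i j + 1)) = (\<Sum>m<n. FL k a b (Suc m))"
  by (rule sum.reindex_bij_witness[where j = "circ_offset n i"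
        and i = "\<lambda>m. if m + i < n then m + i else m + i - n"])
    (use assms in \<open>auto simp: circ_offset_def\<close>)

lemma Bmat_mult_ones:
  assumes "(\<Sum>m<n. FL k a b (Suc m)) = 0"
  shows "Bmat n k a b *\<^sub>v vec n (\<lambda>_. 1) = 0\<^sub>v n"
proof (rule eq_vecI)
  fix i assume "i < dim_vec (0\<^sub>v n :: real vec)"
  then show "(Bmat n k a b *\<^sub>v vec n (\<lambda>_. 1)) $ i = 0\<^sub>v n $ i"
    using Bmat_mult_vec[of "vec n (\<lambda>_. 1)" n i k a b] circ_offset_row_sum[of i n k a b] assms by simp
qed (simp add: Bmat_def)

lemma rank_le_pred_iff_det_zero:
  fixes A :: "'a::field mat"
  assumes A: "A \<in> carrier_mat n n" and n: "n \<ge> 1"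
  shows "vec_space.rank n A \<le> n - 1 \<longleftrightarrow> det A = 0"
  using vec_space.rank_le_nc[OF A] vec_space.det_rank_iff[OF A] n by linarith

lemma distinct_cols_if_trivial_kernel:
  fixes A :: "'a::field mat"
  assumes A: "A \<in> carrier_mat nr nc"
    and ker: "\<And>w. w \<in> carrier_vec nc \<Longrightarrow> A *\<^sub>v w = 0\<^sub>v nr \<Longrightarrow> w = 0\<^sub>v nc"
  shows "distinct (cols A)"
  unfolding distinct_conv_nth
proof (intro allI impI)
  fix j1 j2 assume "j1 < length (cols A)" "j2 < length (cols A)" and ne: "j1 \<noteq> j2"
  then have j: "j1 < nc" "j2 < nc" using A by auto
  have unit: "A *\<^sub>v unit_vec nc j = col A j" if "j < nc" for j
    using A that by (intro eq_vecI) auto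
  define w :: "'a vec" where "w = unit_vec nc j1 - unit_vec nc j2"
  have "w $ j1 = 1" using j ne by (simp add: w_def)
  then have "w \<noteq> 0\<^sub>v nc" using j by auto
  then have "A *\<^sub>v w \<noteq> 0\<^sub>v nr" using ker[of w] by (auto simp: w_def)
  moreover have "A *\<^sub>v w = col A j1 - col A j2"
    using A j by (simp add: w_def mult_minus_distrib_mat_vec unit)
  ultimately show "cols A ! j1 \<noteq> cols A ! j2" using A j by auto
qed

lemma (in vec_space) lin_indpt_cols_if_trivial_kernel:
  assumes A: "A \<in> carrier_mat n nc"
    and ker: "\<And>w. w \<in> carrier_vec nc \<Longrightarrow> A *\<^sub>v w = 0\<^sub>v n \<Longrightarrow> w = 0\<^sub>v nc"
  shows "lin_indpt (set (cols A))"
  using lin_depE[OF A _ distinct_cols_if_trivial_kernel[OF A ker]] ker by blast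

lemma rank_ge_pred_if_kernel_vanishes_at_last:
  fixes B :: "'a::field mat"
  assumes B: "B \<in> carrier_mat n n" and n: "n \<ge> 1"
    and ker: "\<And>v. v \<in> carrier_vec n \<Longrightarrow> B *\<^sub>v v = 0\<^sub>v n \<Longrightarrow> v $ (n - 1) = 0 \<Longrightarrow> v = 0\<^sub>v n"
  shows "n - 1 \<le> vec_space.rank n B"
proof -
  interpret vec_space "TYPE('a)" n .
  define A where "A = mat n (n - 1) (\<lambda>(i, j). B $$ (i, j))"
  define extend :: "'a vec \<Rightarrow> 'a vec" where "extend w = vec n (\<lambda>j. if j < n - 1 then w $ j else 0)" for w
  have A: "A \<in> carrier_mat n (n - 1)" by (simp add: A_def)
  have restrict: "A *\<^sub>v w = B *\<^sub>v extend w" if "w \<in> carrier_vec (n - 1)" for w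
  proof (rule eq_vecI)
    fix i assume "i < dim_vec (B *\<^sub>v extend w)"
    then have i: "i < n" using B by simp
    have split: "{..<n} = insert (n - 1) {..<n - 1}" using n by auto
    have "(B *\<^sub>v extend w) $ i = (\<Sum>j<n. B $$ (i, j) * (if j < n - 1 then w $ j else 0))"
      using i B by (simp add: extend_def scalar_prod_def row_def lessThan_atLeast0)
    also have "\<dots> = (\<Sum>j<n - 1. B $$ (i, j) * w $ j)"
      by (simp add: split)
    also have "\<dots> = (A *\<^sub>v w) $ i"
      using i that by (simp add: A_def scalar_prod_def row_def lessThan_atLeast0)
    finally show "(A *\<^sub>v w) $ i = (B *\<^sub>v extend w) $ i" by simp
  qed (use B in \<open>simp add: A_def\<close>)
  have ker_A: "w = 0\<^sub>v (n - 1)" if w: "w \<in> carrier_vec (n - 1)" "A *\<^sub>v w = 0\<^sub>v n" for w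
  proof -
    have zero: "extend w = 0\<^sub>v n"
      using ker[of "extend w"] w restrict[OF w(1)] n
      by (simp add: extend_def)
    have "w $ j = 0" if "j < n - 1" for j
    proof -
      have "extend w $ j = 0" using zero that by simp
      then show ?thesis using that by (simp add: extend_def)
    qed
    then show ?thesis using w(1) by (intro eq_vecI) auto
  qed
  have "cols A = take (n - 1) (cols B)"
    using A B by (intro nth_equalityI) (auto simp: A_def)
  then have "set (cols A) \<subseteq> set (cols B)" by (simp add: set_take_subset)
  then have "card (set (cols A)) \<le> rank B"
    using rank_ge_card_indpt[OF B] lin_indpt_cols_if_trivial_kernel[OF A ker_A] by blast
  moreover have "card (set (cols A)) = n - 1"
    using distinct_card[OF distinct_cols_if_trivial_kernel[OF A ker_A]] A by simp
  ultimately show ?thesis by simp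
qed

lemma det_Bmat_eq_0_if_linear_form_zero:
  assumes n: "n \<ge> 1" and k: "k \<noteq> 0" and singular: "a * (Pv n k - 1) + b * (Qv n k - k - 2) = 0"
  shows "det (Bmat n k a b) = 0"
proof -
  have "(\<Sum>m<n. FL k a b (Suc m)) = 0"
    using singular k_times_sum_FL[of k a b n] k by (simp add: linear_form_eq_FL)
  then have "Bmat n k a b *\<^sub>v vec n (\<lambda>_. 1) = 0\<^sub>v n" by (rule Bmat_mult_ones)
  moreover have "vec n (\<lambda>_. 1) \<noteq> (0\<^sub>v n :: real vec)"
    using n by (auto dest!: arg_cong[of _ _ "\<lambda>v. v $ 0"])
  ultimately show ?thesis
    using det_0_iff_vec_prod_zero_field[OF Bmat_carrier] vec_carrier by blast
qed

lemma det_Bmat_eq_0_iff: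
  assumes odd: "odd n" and n: "3 \<le> n" and k: "k \<noteq> 0"
  shows "det (Bmat n k a b) = 0 \<longleftrightarrow> a * (Pv n k - 1) + b * (Qv n k - k - 2) = 0"
proof
  assume "det (Bmat n k a b) = 0"
  then obtain v where v: "v \<in> carrier_vec n" "v \<noteq> 0\<^sub>v n" "Bmat n k a b *\<^sub>v v = 0\<^sub>v n"
    using det_0_iff_vec_prod_zero_field[OF Bmat_carrier] by blast
  show "a * (Pv n k - 1) + b * (Qv n k - k - 2) = 0"
  proof (rule ccontr)
    assume "a * (Pv n k - 1) + b * (Qv n k - k - 2) \<noteq> 0"
    then have not_opposite: "(FL k a b 1 - FL k a b (Suc n)) + (FL k a b 0 - FL k a b n) \<noteq> 0"
      by (simp add: linear_form_eq_FL)
    have "v $ j = 0" if "j < n" for j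
      using cyclic_relation_imp_zero[where x = "\<lambda>i. v $ i", OF odd Bmat_kernel_relation[OF n v(1,3)] not_opposite that] .
    then have "v = 0\<^sub>v n" using v(1) by (intro eq_vecI) auto
    then show False using v(2) by simp
  qed
next
  assume "a * (Pv n k - 1) + b * (Qv n k - k - 2) = 0"
  then show "det (Bmat n k a b) = 0"
    using n k by (intro det_Bmat_eq_0_if_linear_form_zero) simp_all
qed

lemma mrank_Bmat_eq_pred:
  assumes n: "3 \<le> n" and k: "k \<noteq> 0" and ab: "\<not> (a = 0 \<and> b = 0)"
    and singular: "a * (Pv n k - 1) + b * (Qv n k - k - 2) = 0"
  shows "mrank (Bmat n k a b) = n - 1"
proof -
  define \<alpha> where "\<alpha> = FL k a b 1 - FL k a b (Suc n)"
  have opposite: "FL k a b 0 - FL k a b n = - \<alpha>"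
    using singular unfolding \<alpha>_def linear_form_eq_FL by simp
  then have "\<alpha> \<noteq> 0"
    using FL_periodic_imp_zero[OF k, of n a b] n ab unfolding \<alpha>_def by auto
  have "n - 1 \<le> mrank (Bmat n k a b)"
    unfolding mrank_Bmat
  proof (rule rank_ge_pred_if_kernel_vanishes_at_last[OF Bmat_carrier])
    fix v :: "real vec"
    assume v: "v \<in> carrier_vec n" "Bmat n k a b *\<^sub>v v = 0\<^sub>v n" "v $ (n - 1) = 0"
    have const: "v $ j = v $ 0" if "j < n" for j
      using cyclic_relation_imp_constant[where x = "\<lambda>i. v $ i", OF _ \<open>\<alpha> \<noteq> 0\<close> that]
        Bmat_kernel_relation[OF n v(1,2)] opposite unfolding \<alpha>_def by simp
    have "v $ 0 = 0" using const[of "n - 1"] v(3) n by simp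
    then show "v = 0\<^sub>v n" using const v(1) by (intro eq_vecI) auto
  qed (use n in simp)
  moreover have "mrank (Bmat n k a b) \<le> n - 1"
    using det_Bmat_eq_0_if_linear_form_zero[OF _ k singular] rank_le_pred_iff_det_zero[OF Bmat_carrier] n
    unfolding mrank_Bmat by simp
  ultimately show ?thesis by simp
qed

lemma cusp_line_intersection_iff:
  fixes a b p q :: real
  assumes p: "p \<noteq> 0" and q: "q \<noteq> 0"
  shows "4 * a ^ 3 + 27 * b ^ 2 = 0 \<and> \<not> (a = 0 \<and> b = 0) \<and> a * p + b * q = 0
    \<longleftrightarrow> a = - (27 * p ^ 2) / (4 * q ^ 2) \<and> b = 27 * p ^ 3 / (4 * q ^ 3)"
proof
  assume h: "4 * a ^ 3 + 27 * b ^ 2 = 0 \<and> \<not> (a = 0 \<and> b = 0) \<and> a * p + b * q = 0"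
  then have b: "b = - a * p / q" using q by (simp add: field_simps)
  then have "a \<noteq> 0" using h by auto
  moreover have "a\<^sup>2 * (4 * a + 27 * p ^ 2 / q ^ 2) = 0"
    using h q unfolding b by (simp add: field_simps power2_eq_square power3_eq_cube)
  ultimately have "4 * a + 27 * p ^ 2 / q ^ 2 = 0"
    by simp
  then have a: "a = - (27 * p ^ 2) / (4 * q ^ 2)"
    by (simp add: field_simps)
  then show "a = - (27 * p ^ 2) / (4 * q ^ 2) \<and> b = 27 * p ^ 3 / (4 * q ^ 3)"
    using q unfolding b a by (simp add: field_simps power2_eq_square power3_eq_cube)
next
  assume "a = - (27 * p ^ 2) / (4 * q ^ 2) \<and> b = 27 * p ^ 3 / (4 * q ^ 3)"
  then have a: "a = - (27 * p ^ 2) / (4 * q ^ 2)" and b: "b = 27 * p ^ 3 / (4 * q ^ 3)" by auto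
  show "4 * a ^ 3 + 27 * b ^ 2 = 0 \<and> \<not> (a = 0 \<and> b = 0) \<and> a * p + b * q = 0"
    using p q unfolding a b by (simp add: field_simps power2_eq_square power3_eq_cube)
qed

lemma mem_Tset_pred_iff:
  assumes odd: "odd n" and n: "3 \<le> n"
  shows "(k, a, b) \<in> Tset n (n - 1) \<longleftrightarrow> k \<notin> Cset n \<and> a = a3 n k \<and> b = b3 n k"
proof -
  have "mrank (Bmat n k a b) \<le> n - 1 \<longleftrightarrow> det (Bmat n k a b) = 0"
    using n rank_le_pred_iff_det_zero[OF Bmat_carrier] unfolding mrank_Bmat by simp
  then have "(k, a, b) \<in> Tset n (n - 1) \<longleftrightarrow> k \<notin> Cset n \<and> k \<noteq> 0 \<and> 4 * a ^ 3 + 27 * b ^ 2 = 0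
      \<and> \<not> (a = 0 \<and> b = 0) \<and> det (Bmat n k a b) = 0"
    unfolding Tset_def by auto
  also have "\<dots> \<longleftrightarrow> k \<notin> Cset n \<and> k \<noteq> 0 \<and> 4 * a ^ 3 + 27 * b ^ 2 = 0
      \<and> \<not> (a = 0 \<and> b = 0) \<and> a * (Pv n k - 1) + b * (Qv n k - k - 2) = 0"
    using det_Bmat_eq_0_iff[OF odd n] by blast
  also have "\<dots> \<longleftrightarrow> k \<notin> Cset n \<and> a = a3 n k \<and> b = b3 n k"
    using cusp_line_intersection_iff[of "Pv n k - 1" "Qv n k - k - 2" a b] zero_in_Cset[of n]
    unfolding Cset_def a3_def b3_def by auto
  finally show ?thesis .
qed

lemma mrank_Bmat_if_mem_Tset_pred:
  assumes odd: "odd n" and n: "3 \<le> n" and T: "(k, a, b) \<in> Tset n (n - 1)"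
  shows "mrank (Bmat n k a b) = n - 1"
proof -
  have k: "k \<noteq> 0" and ab: "\<not> (a = 0 \<and> b = 0)" and "mrank (Bmat n k a b) \<le> n - 1"
    using T unfolding Tset_def by auto
  then have "det (Bmat n k a b) = 0"
    using n rank_le_pred_iff_det_zero[OF Bmat_carrier] unfolding mrank_Bmat by simp
  then show ?thesis
    using mrank_Bmat_eq_pred[OF n k ab] det_Bmat_eq_0_iff[OF odd n k] by simp
qed

theorem theorem4p13:
  fixes n :: nat
  assumes "odd n" and "n \<ge> 3"
  shows "Tset n (n - 1) = {(k, a3 n k, b3 n k) | k. k \<notin> Cset n}
    \<and> finite {(k, a, b) \<in> Tset n (n - 1). mrank (Bmat n k a b) \<noteq> n - 1}
    \<and> (\<forall>r. 1 \<le> r \<and> r \<le> n - 2 \<longrightarrow>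
           finite {(k, a, b) \<in> Tset n (n - 1). mrank (Bmat n k a b) = r})"
proof (intro conjI allI impI)
  show "Tset n (n - 1) = {(k, a3 n k, b3 n k) | k. k \<notin> Cset n}"
    using mem_Tset_pred_iff[OF assms] by auto
  have "{(k, a, b) \<in> Tset n (n - 1). mrank (Bmat n k a b) \<noteq> n - 1} = {}"
    using mrank_Bmat_if_mem_Tset_pred[OF assms] by auto
  then show "finite {(k, a, b) \<in> Tset n (n - 1). mrank (Bmat n k a b) \<noteq> n - 1}"
    by (metis finite.emptyI)
  fix r assume "1 \<le> r \<and> r \<le> n - 2"
  then have "{(k, a, b) \<in> Tset n (n - 1). mrank (Bmat n k a b) = r} = {}"
    using mrank_Bmat_if_mem_Tset_pred[OF assms] assms(2) by fastforce
  then show "finite {(k, a, b) \<in> Tset n (n - 1). mrank (Bmat n k a b) = r}"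
    by (metis finite.emptyI)
qed

end
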